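(* Let $M\ge 1$, $H\ge1$, $[M]=\{0,\dots,M-1\}$, and fix a message $s_{1:H}\in[M]^H$. Let $T\ge1$ and let $\mathbf z=(z_1,\dots,z_T)$ be a realized sequence of step seeds; let $\mathcal Z_T$ be the set of distinct values among $z_1,\dots,z_T$, and for $z\in\mathcal Z_T$ let $n_z=|\{t\in\{1,\dots,T\}: z_t=z\}|$, $S_T=\sum_{z\in\mathcal Z_T}n_z^2$ and $T_{\mathrm{eff}}=T^2/S_T$. To each distinct seed $z$ is associated a random pair $(i_z,\phi_z)$ with $i_z\in\{1,\dots,H\}$ and $\phi_z$ a permutation of $[M]$; at step $t$ the target bin is $r_t^\star=\phi_{z_t}(s_{i_{z_t}})$. Assume that, conditional on $\mathbf z$, the pairs $\{(i_z,\phi_z)\}_{z\in\mathcal Z_T}$ are independent across distinct seeds, and each $\phi_z$ is a uniformly random permutation of $[M]$ independent of $i_z$. Define $\hat\pi_T(r)=\frac1T\sum_{t=1}^T\mathbf 1\{r_t^\star=r\}$ for $r\in[M]$. Then for every $r\in[M]$, $$\mathbb E\big[\hat\pi_T(r)\mid \mathbf z\big]=\frac1M,$$ and for every $\epsilon>0$, $$\mathbb P\Big(\Big|\hat\pi_T(r)-\frac1M\Big|\ge\epsilon\ \Big|\ \mathbf z\Big)\le 2\exp\!\Big(-\frac{2\epsilon^2T^2}{S_T}\Big)=2\exp\!\big(-2\epsilon^2T_{\mathrm{eff}}\big).$$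
   Context: This models the QuantileMark watermark, in which at each step $t$ a position index $i_t$ (which message symbol to embed) and a permutation $\phi_t$ of $[M]$ (mapping symbols to quantile-bin indices) are derived by a pseudorandom function from a secret key and a step seed $z_t$ (a hash of the local context); repeated seeds reuse the same pair. $\hat\pi_T$ is the empirical occupancy of target bins over $T$ steps. *)

theory Defs
  imports "HOL-Probability.Probability"
begin

definition seed_set :: "(nat \<Rightarrow> 'z) \<Rightarrow> nat \<Rightarrow> 'z set" where
  "seed_set z T = z ` {1..T}"

definition seed_count :: "(nat \<Rightarrow> 'z) \<Rightarrow> nat \<Rightarrow> 'z \<Rightarrow> nat" where
  "seed_count z T w = card {t \<in> {1..T}. z t = w}"

definition S_T :: "(nat \<Rightarrow> 'z) \<Rightarrow> nat \<Rightarrow> real" where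
  "S_T z T = (\<Sum>w\<in>seed_set z T. real (seed_count z T w) ^ 2)"

definition T_eff :: "(nat \<Rightarrow> 'z) \<Rightarrow> nat \<Rightarrow> real" where
  "T_eff z T = real T ^ 2 / S_T z T"

(* target bin at step t: phi_{z_t}(s_{i_{z_t}}), where X w \<omega> = (i_w, phi_w) *)
definition target_bin ::
  "('z \<Rightarrow> 'a \<Rightarrow> nat \<times> (nat \<Rightarrow> nat)) \<Rightarrow> (nat \<Rightarrow> nat) \<Rightarrow> (nat \<Rightarrow> 'z) \<Rightarrow> nat \<Rightarrow> 'a \<Rightarrow> nat" where
  "target_bin X s z t \<omega> = snd (X (z t) \<omega>) (s (fst (X (z t) \<omega>)))"

definition pi_hat ::
  "('z \<Rightarrow> 'a \<Rightarrow> nat \<times> (nat \<Rightarrow> nat)) \<Rightarrow> (nat \<Rightarrow> nat) \<Rightarrow> (nat \<Rightarrow> 'z) \<Rightarrow> nat \<Rightarrow> nat \<Rightarrow> 'a \<Rightarrow> real" where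
  "pi_hat X s z T r \<omega> = (1 / real T) * (\<Sum>t\<in>{1..T}. (if target_bin X s z t \<omega> = r then 1 else 0))"

end

theory Submission
  imports Defs
begin

text \<open>
  Grouping the steps by their seed writes \<pi>_T(r) as a sum over the distinct seeds z of
  (n_z / T) * 1{\<phi>_z(s_(i_z)) = r}, i.e. of independent indicators with weights n_z / T.
  Whatever the index i_z is, the independent uniform permutation \<phi>_z sends s_(i_z) to r with
  probability 1/M, so the mean is 1/M, and Hoeffding's inequality for summands in [0, n_z / T]
  gives the tail bound because the squared weights sum to S_T / T^2.
\<close>

lemma card_permutes_with_value:
  assumes "finite S" "a \<in> S" "b \<in> S"
  shows "card {p. p permutes S \<and> p a = b} = fact (card S - 1)"
proof -
  let ?swap = "\<lambda>q. Transposition.transpose a b \<circ> q"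
  have "bij_betw ?swap {q. q permutes S - {a}} {p. p permutes S \<and> p a = b}"
  proof (rule bij_betwI[where g = ?swap])
    show "?swap \<in> {q. q permutes S - {a}} \<rightarrow> {p. p permutes S \<and> p a = b}"
    proof
      fix q assume "q \<in> {q. q permutes S - {a}}"
      then have q: "q permutes S - {a}" by simp
      then have "q permutes S" by (rule permutes_subset) auto
      then have "?swap q permutes S"
        using permutes_compose[OF _ permutes_swap_id[OF assms(2,3)]] by simp
      moreover have "q a = a" using q by (simp add: permutes_not_in)
      ultimately show "?swap q \<in> {p. p permutes S \<and> p a = b}" by simp
    qed
    show "?swap \<in> {p. p permutes S \<and> p a = b} \<rightarrow> {q. q permutes S - {a}}"
    proof
      fix p assume "p \<in> {p. p permutes S \<and> p a = b}"
      then have "p permutes insert a (S - {a})" "p a = b"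
        using assms by (auto simp: insert_absorb)
      then show "?swap p \<in> {q. q permutes S - {a}}"
        using permutes_insert_lemma[of p a "S - {a}"] by simp
    qed
  qed (auto simp: fun_eq_iff o_assoc)
  then have "card {p. p permutes S \<and> p a = b} = card {q. q permutes S - {a}}"
    by (simp add: bij_betw_same_card)
  also have "\<dots> = fact (card S - 1)"
    using assms by (intro card_permutations) auto
  finally show ?thesis .
qed

lemma measure_uniform_permutes_value:
  assumes "finite S" "a \<in> S" "b \<in> S"
  shows "measure (uniform_measure (count_space UNIV) {p. p permutes S}) {p. p a = b}
           = 1 / card S"
proof -
  have fin: "finite {p. p permutes S}" using assms(1) by (rule finite_permutations)
  have "measure (uniform_measure (count_space UNIV) {p. p permutes S}) {p. p a = b}
      = measure (count_space UNIV) {p. p permutes S \<and> p a = b}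
          / measure (count_space UNIV) {p. p permutes S}"
    using fin by (subst measure_uniform_measure)
      (auto simp: emeasure_count_space Collect_conj_eq intro: permutes_id)
  also have "\<dots> = fact (card S - 1) / fact (card S)"
    using fin by (simp add: measure_count_space card_permutes_with_value card_permutations assms)
  also have "\<dots> = 1 / card S"
  proof -
    have "S \<noteq> {}" using assms(2) by blast
    then have "(fact (card S) :: real) = real (card S) * fact (card S - 1)"
      using assms(1) by (intro fact_reduce) (simp add: card_gt_0_iff)
    then show ?thesis by simp
  qed
  finally show ?thesis .
qed

lemma sum_steps_by_seed:
  fixes f :: "'z \<Rightarrow> 'b :: comm_semiring_1"
  shows "(\<Sum>t\<in>{1..T}. f (z t)) = (\<Sum>w\<in>seed_set z T. of_nat (seed_count z T w) * f w)"
proof -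
  have "(\<Sum>t\<in>{1..T}. f (z t)) = (\<Sum>w\<in>z ` {1..T}. \<Sum>t\<in>{t\<in>{1..T}. z t = w}. f (z t))"
    by (rule sum.image_gen) simp
  then show ?thesis
    unfolding seed_set_def seed_count_def by simp
qed

lemma sum_seed_count: "(\<Sum>w\<in>seed_set z T. seed_count z T w) = T"
  using sum_steps_by_seed[where f = "\<lambda>_. 1::nat" and z = z and T = T] by simp

lemma seed_count_pos:
  assumes "w \<in> seed_set z T"
  shows "seed_count z T w > 0"
  using assms unfolding seed_set_def seed_count_def by (auto simp: card_gt_0_iff)

lemma finite_seed_set: "finite (seed_set z T)"
  by (simp add: seed_set_def)

lemma S_T_pos:
  assumes "T \<ge> 1"
  shows "S_T z T > 0"
proof -
  have "seed_set z T \<noteq> {}" using assms by (auto simp: seed_set_def)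
  then show ?thesis
    unfolding S_T_def by (intro sum_pos finite_seed_set) (auto dest: seed_count_pos)
qed

lemma sum_seed_weights:
  assumes "T \<ge> 1"
  shows "(\<Sum>w\<in>seed_set z T. real (seed_count z T w) / real T) = 1"
  using assms by (simp add: sum_divide_distrib[symmetric] of_nat_sum[symmetric] sum_seed_count)

lemma sum_seed_weights_sq:
  "(\<Sum>w\<in>seed_set z T. (real (seed_count z T w) / real T)\<^sup>2) = S_T z T / real T ^ 2"
  by (simp add: S_T_def power_divide sum_divide_distrib)

lemma pi_hat_eq_weighted_sum:
  "pi_hat X s z T r = (\<lambda>\<omega>. \<Sum>w\<in>seed_set z T.
     real (seed_count z T w) / real T * indicator {(i, \<phi>). \<phi> (s i) = r} (X w \<omega>))"
  unfolding pi_hat_def target_bin_def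
  by (subst sum_steps_by_seed, rule ext)
     (simp add: sum_distrib_left indicator_def case_prod_beta of_bool_def)

lemma (in prob_space) prob_uniform_perm_at_random_index:
  fixes Y :: "'a \<Rightarrow> 'i \<times> ('b \<Rightarrow> 'b)"
  assumes Y: "Y \<in> measurable M (count_space UNIV)"
    and J: "finite J" "\<forall>\<omega>\<in>space M. fst (Y \<omega>) \<in> J" "\<forall>i\<in>J. s i \<in> S"
    and S: "finite S" "b \<in> S"
    and unif: "distr M (count_space UNIV) (\<lambda>\<omega>. snd (Y \<omega>))
                 = uniform_measure (count_space UNIV) {p. p permutes S}"
    and indep_pair: "\<forall>A B. prob {\<omega>\<in>space M. fst (Y \<omega>) \<in> A \<and> snd (Y \<omega>) \<in> B}
                  = prob {\<omega>\<in>space M. fst (Y \<omega>) \<in> A} * prob {\<omega>\<in>space M. snd (Y \<omega>) \<in> B}"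
  shows "prob {\<omega>\<in>space M. Y \<omega> \<in> {(i, \<phi>). \<phi> (s i) = b}} = 1 / card S"
proof -
  have ev: "{\<omega>\<in>space M. Q (Y \<omega>)} \<in> events" for Q
    using measurable_sets[OF Y, of "Collect Q"] by (simp add: vimage_def Int_def conj_commute)
  have ev_index: "{\<omega>\<in>space M. fst (Y \<omega>) = i} \<in> events"
    and ev_hit: "{\<omega>\<in>space M. fst (Y \<omega>) = i \<and> snd (Y \<omega>) (s i) = b} \<in> events" for i
    using ev[of "\<lambda>y. fst y = i"] ev[of "\<lambda>y. fst y = i \<and> snd y (s i) = b"] by simp_all
  have snd_Y: "(\<lambda>\<omega>. snd (Y \<omega>)) \<in> measurable M (count_space UNIV)"
    using measurable_compose[OF Y, of snd "count_space UNIV"] by (simp add: o_def)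
  have perm_hit: "prob {\<omega>\<in>space M. snd (Y \<omega>) \<in> {p. p (s i) = b}} = 1 / card S"
    if "i \<in> J" for i
  proof -
    have "prob {\<omega>\<in>space M. snd (Y \<omega>) \<in> {p. p (s i) = b}}
        = measure (distr M (count_space UNIV) (\<lambda>\<omega>. snd (Y \<omega>))) {p. p (s i) = b}"
      by (simp add: measure_distr[OF snd_Y] vimage_def Int_def conj_commute)
    then show ?thesis
      using measure_uniform_permutes_value[OF S(1) _ S(2), of "s i"] J(3) that unif by simp
  qed
  have "{\<omega>\<in>space M. Y \<omega> \<in> {(i, \<phi>). \<phi> (s i) = b}}
      = (\<Union>i\<in>J. {\<omega>\<in>space M. fst (Y \<omega>) \<in> {i} \<and> snd (Y \<omega>) \<in> {p. p (s i) = b}})"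
    using J(2) by (auto simp: case_prod_beta)
  then have "prob {\<omega>\<in>space M. Y \<omega> \<in> {(i, \<phi>). \<phi> (s i) = b}}
      = (\<Sum>i\<in>J. prob {\<omega>\<in>space M. fst (Y \<omega>) \<in> {i} \<and> snd (Y \<omega>) \<in> {p. p (s i) = b}})"
    using J(1) by (simp only:)
      (intro finite_measure_finite_Union, auto simp: disjoint_family_on_def ev_hit)
  also have "\<dots> = (\<Sum>i\<in>J. prob {\<omega>\<in>space M. fst (Y \<omega>) \<in> {i}}
                      * prob {\<omega>\<in>space M. snd (Y \<omega>) \<in> {p. p (s i) = b}})"
    by (simp only: indep_pair)
  also have "\<dots> = (\<Sum>i\<in>J. prob {\<omega>\<in>space M. fst (Y \<omega>) \<in> {i}}) * (1 / card S)"
    unfolding sum_distrib_right by (intro sum.cong refl) (simp only: perm_hit)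
  also have "(\<Sum>i\<in>J. prob {\<omega>\<in>space M. fst (Y \<omega>) \<in> {i}})
      = prob (\<Union>i\<in>J. {\<omega>\<in>space M. fst (Y \<omega>) \<in> {i}})"
    using J(1) by (intro finite_measure_finite_Union[symmetric])
      (auto simp: disjoint_family_on_def ev_index)
  also have "(\<Union>i\<in>J. {\<omega>\<in>space M. fst (Y \<omega>) \<in> {i}}) = space M"
    using J(2) by auto
  finally show ?thesis by (simp add: prob_space)
qed

lemma (in prob_space) weighted_indicator_sum_concentration:
  fixes X :: "'i \<Rightarrow> 'a \<Rightarrow> 'b" and c :: "'i \<Rightarrow> real"
  assumes "finite I" and indep: "indep_vars (\<lambda>_. count_space UNIV) X I"
    and c: "\<forall>i\<in>I. c i \<ge> 0" "(\<Sum>i\<in>I. (c i)\<^sup>2) > 0"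
    and p: "\<forall>i\<in>I. prob {\<omega>\<in>space M. X i \<omega> \<in> A} = p"
  defines "Y \<equiv> \<lambda>\<omega>. \<Sum>i\<in>I. c i * indicator A (X i \<omega>)"
  shows "expectation Y = p * (\<Sum>i\<in>I. c i)"
    and "\<epsilon> \<ge> 0 \<Longrightarrow> prob {\<omega>\<in>space M. \<bar>Y \<omega> - p * (\<Sum>i\<in>I. c i)\<bar> \<ge> \<epsilon>}
           \<le> 2 * exp (-2 * \<epsilon>\<^sup>2 / (\<Sum>i\<in>I. (c i)\<^sup>2))"
proof -
  have expect: "expectation (\<lambda>\<omega>. c i * indicator A (X i \<omega>)) = c i * p" if "i \<in> I" for i
  proof -
    have "expectation (\<lambda>\<omega>. c i * indicator A (X i \<omega>))
        = expectation (\<lambda>\<omega>. c i * indicator {\<omega>\<in>space M. X i \<omega> \<in> A} \<omega>)"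
      by (intro Bochner_Integration.integral_cong) (auto simp: indicator_def)
    also have "\<dots> = c i * prob {\<omega>\<in>space M. X i \<omega> \<in> A}"
      by (simp add: Int_absorb2)
    finally show ?thesis
      using p that by simp
  qed
  have mean:
    "p * (\<Sum>i\<in>I. c i) = (\<Sum>i\<in>I. expectation (\<lambda>\<omega>. c i * indicator A (X i \<omega>)))"
    unfolding sum_distrib_left by (intro sum.cong refl) (simp only: expect mult.commute)
  interpret Hoeffding_ineq M I "\<lambda>i \<omega>. c i * indicator A (X i \<omega>)" "\<lambda>_. 0" c
    "p * (\<Sum>i\<in>I. c i)"
  proof unfold_locales
    show "indep_vars (\<lambda>_. borel) (\<lambda>i \<omega>. c i * indicator A (X i \<omega>)) I"
      by (rule indep_vars_compose2[OF indep]) simp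
    show "AE \<omega> in M. c i * indicator A (X i \<omega>) \<in> {0..c i}" if "i \<in> I" for i
      using c(1) that by (intro AE_I2) (simp add: indicator_def)
  qed (use \<open>finite I\<close> mean in simp_all)
  show "expectation Y = p * (\<Sum>i\<in>I. c i)"
    unfolding Y_def mean
    by (rule Bochner_Integration.integral_sum)
       (rule interval_bounded_random_variable.integrable[OF bounded_random_variable])
  show "prob {\<omega>\<in>space M. \<bar>Y \<omega> - p * (\<Sum>i\<in>I. c i)\<bar> \<ge> \<epsilon>}
          \<le> 2 * exp (-2 * \<epsilon>\<^sup>2 / (\<Sum>i\<in>I. (c i)\<^sup>2))" if "\<epsilon> \<ge> 0"
    using Hoeffding_ineq_abs_ge[OF that] c(2) by (simp add: Y_def)
qed

theorem proposition1:
  fixes P :: "'a measure"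
    and M H T :: nat
    and s :: "nat \<Rightarrow> nat"
    and z :: "nat \<Rightarrow> 'z"
    and X :: "'z \<Rightarrow> 'a \<Rightarrow> nat \<times> (nat \<Rightarrow> nat)"
  assumes "prob_space P"
    and "M \<ge> 1" and "H \<ge> 1" and "T \<ge> 1"
    and msg: "\<forall>i\<in>{1..H}. s i < M"
    and indep: "prob_space.indep_vars P (\<lambda>_. count_space UNIV) X (seed_set z T)"
    and idx: "\<forall>w\<in>seed_set z T. \<forall>\<omega>\<in>space P. fst (X w \<omega>) \<in> {1..H}"
    and unif: "\<forall>w\<in>seed_set z T.
       distr P (count_space UNIV) (\<lambda>\<omega>. snd (X w \<omega>))
         = uniform_measure (count_space UNIV) {p. p permutes {..<M}}"
    and indep_pair: "\<forall>w\<in>seed_set z T. \<forall>A B.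
       measure P {\<omega>\<in>space P. fst (X w \<omega>) \<in> A \<and> snd (X w \<omega>) \<in> B}
         = measure P {\<omega>\<in>space P. fst (X w \<omega>) \<in> A} * measure P {\<omega>\<in>space P. snd (X w \<omega>) \<in> B}"
  shows "\<forall>r<M.
      prob_space.expectation P (pi_hat X s z T r) = 1 / real M
    \<and> (\<forall>\<epsilon>>0.
         measure P {\<omega>\<in>space P. \<bar>pi_hat X s z T r \<omega> - 1 / real M\<bar> \<ge> \<epsilon>}
           \<le> 2 * exp (- (2 * \<epsilon>^2 * real T ^ 2 / S_T z T))
       \<and> 2 * exp (- (2 * \<epsilon>^2 * real T ^ 2 / S_T z T)) = 2 * exp (- 2 * \<epsilon>^2 * T_eff z T))"
proof (intro allI impI conjI)
  interpret prob_space P by fact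
  fix r assume "r < M"
  have hit:
    "\<forall>w\<in>seed_set z T. prob {\<omega>\<in>space P. X w \<omega> \<in> {(i, \<phi>). \<phi> (s i) = r}} = 1 / M"
  proof
    fix w assume w: "w \<in> seed_set z T"
    have "X w \<in> measurable P (count_space UNIV)"
      using indep w unfolding indep_vars_def by blast
    then show "prob {\<omega>\<in>space P. X w \<omega> \<in> {(i, \<phi>). \<phi> (s i) = r}} = 1 / M"
      using prob_uniform_perm_at_random_index[where J = "{1..H}" and S = "{..<M}"]
        w idx msg unif indep_pair \<open>r < M\<close> by simp
  qed
  have weights_nonneg: "\<forall>w\<in>seed_set z T. real (seed_count z T w) / real T \<ge> 0"
    by simp
  have weights_sq_pos: "(\<Sum>w\<in>seed_set z T. (real (seed_count z T w) / real T)\<^sup>2) > 0"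
    unfolding sum_seed_weights_sq using S_T_pos[OF \<open>T \<ge> 1\<close>] \<open>T \<ge> 1\<close>
    by (intro divide_pos_pos) auto
  note concentration = weighted_indicator_sum_concentration
    [OF finite_seed_set indep weights_nonneg weights_sq_pos hit,
     unfolded sum_seed_weights[OF \<open>T \<ge> 1\<close>] sum_seed_weights_sq]
  show "expectation (pi_hat X s z T r) = 1 / real M"
    using concentration(1) by (simp add: pi_hat_eq_weighted_sum)
  fix \<epsilon> :: real assume "\<epsilon> > 0"
  show "prob {\<omega>\<in>space P. \<bar>pi_hat X s z T r \<omega> - 1 / real M\<bar> \<ge> \<epsilon>}
          \<le> 2 * exp (- (2 * \<epsilon>\<^sup>2 * real T ^ 2 / S_T z T))"
    using concentration(2)[of \<epsilon>] \<open>\<epsilon> > 0\<close>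
    by (simp add: pi_hat_eq_weighted_sum)
  show "2 * exp (- (2 * \<epsilon>\<^sup>2 * real T ^ 2 / S_T z T))
      = 2 * exp (- 2 * \<epsilon>\<^sup>2 * T_eff z T)"
    by (simp add: T_eff_def)
qed

end
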